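(* Let $k=4$, $t\ge 2$, $m=2^t-3$, and let $n$ be an integer with $0\le n\le m$, $i=m-n$. Then in $\mathbb{F}_2[w_2,w_3,w_4]$, \[ q_iq_n+q_{i+1}q_{n-1}+(q_{i+2}+w_2q_i)q_{n-2}+(q_{i+3}+w_2q_{i+1}+w_3q_i)q_{n-3}=0, \] a homogeneous relation of degree $2^t-3$ among $q_{n-3},\dots,q_n$.
   Context: In $\mathbb{F}_2[w_2,w_3,w_4]$ ($\deg w_i=i$), $q_0=1$, $q_m=0$ for $m<0$, and $q_m=w_2q_{m-2}+w_3q_{m-3}+w_4q_{m-4}$ for $m\ge1$. *)

theory Defs
  imports "HOL-Library.Z2" "HOL-Computational_Algebra.Polynomial"
begin

text \<open>F_2[w2,w3,w4] rendered as iterated univariate polynomials over F_2 (type bit):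
  outermost variable w4, then w3, innermost w2.\<close>

type_synonym F2w = "bit poly poly poly"

definition w2 :: F2w where "w2 = [:[:[:0, 1:]:]:]"
definition w3 :: F2w where "w3 = [:[:0, 1:]:]"
definition w4 :: F2w where "w4 = [:0, 1:]"

fun qn :: "nat \<Rightarrow> F2w" where
  "qn n = (if n = 0 then 1 else
     (if n \<ge> 2 then w2 * qn (n - 2) else 0)
   + (if n \<ge> 3 then w3 * qn (n - 3) else 0)
   + (if n \<ge> 4 then w4 * qn (n - 4) else 0))"

definition q :: "int \<Rightarrow> F2w" where
  "q m = (if m < 0 then 0 else qn (nat m))"

end

theory Submission
  imports Defs
begin

text \<open>
  The generating function of the q_m is 1/P with P(x) = 1 + w2 x^2 + w3 x^3 + w4 x^4.
  In characteristic 2 it equals P times its own square, and its square only has the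
  even-degree coefficients q_k^2; comparing odd coefficients gives
  q_(2k+1) = w3 q_(k-1)^2, hence q_m = 0 for m = 2^t - 3 by induction on t.
  On the other hand, for fixed m the left-hand side of the relation does not depend
  on n: applying the recursion once to q_(n+1) and once to q_(i+3) turns its value at
  n + 1 into its value at n, and at n = 0 it is q_m.
\<close>

declare qn.simps [simp del]

lemma two_F2w_eq_0: "(2::F2w) = 0"
  by (simp add: numeral_poly)

lemma F2w_add_self [simp]: "(x::F2w) + x = 0"
  by (metis mult_2 mult_zero_left two_F2w_eq_0)

lemma F2w_add_self_left [simp]: "(x::F2w) + (x + y) = y"
  by (simp flip: add.assoc)

lemma F2w_square_add: "((x::F2w) + y) ^ 2 = x ^ 2 + y ^ 2"
  by (simp add: power2_sum two_F2w_eq_0)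

lemma q_neg: "k < 0 \<Longrightarrow> q k = 0"
  by (simp add: q_def)

lemma q_0: "q 0 = 1"
  by (simp add: q_def qn.simps)

lemma q_rec:
  assumes "k \<ge> 1"
  shows "q k = w2 * q (k - 2) + w3 * q (k - 3) + w4 * q (k - 4)"
proof -
  have "nat (k - 2) = nat k - 2" "nat (k - 3) = nat k - 3" "nat (k - 4) = nat k - 4"
    by auto
  then show ?thesis
    using assms by (subst q_def, subst qn.simps) (auto simp: q_def)
qed

lemma q_1: "q 1 = 0"
  using q_rec[of 1] by (simp add: q_neg)

lemma q_double:
  "q (2 * k) = q k ^ 2 + w2 * q (k - 1) ^ 2 + w4 * q (k - 2) ^ 2
   \<and> q (2 * k + 1) = w3 * q (k - 1) ^ 2"
proof (induction "nat k" arbitrary: k rule: less_induct)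
  case less
  consider "k < 0" | "k = 0" | "k \<ge> 1"
    by linarith
  then show ?case
  proof cases
    case 1
    then show ?thesis by (simp add: q_neg)
  next
    case 2
    then show ?thesis by (simp add: q_0 q_1 q_neg)
  next
    case 3
    have "nat (k - 1) < nat k" "nat (k - 2) < nat k"
      using 3 by auto
    then have even1: "q (2 * k - 2) = q (k - 1) ^ 2 + w2 * q (k - 2) ^ 2 + w4 * q (k - 3) ^ 2"
      and odd1: "q (2 * k - 1) = w3 * q (k - 2) ^ 2"
      and even2: "q (2 * k - 4) = q (k - 2) ^ 2 + w2 * q (k - 3) ^ 2 + w4 * q (k - 4) ^ 2"
      and odd2: "q (2 * k - 3) = w3 * q (k - 3) ^ 2"
      using less[of "k - 1"] less[of "k - 2"] by (simp_all add: algebra_simps)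
    have "q (2 * k) = w2 * q (2 * k - 2) + w3 * q (2 * k - 3) + w4 * q (2 * k - 4)"
      using q_rec[of "2 * k"] 3 by simp
    also have "\<dots> = (w2 * q (k - 2) + w3 * q (k - 3) + w4 * q (k - 4)) ^ 2
                    + w2 * q (k - 1) ^ 2 + w4 * q (k - 2) ^ 2"
      unfolding even1 odd2 even2 F2w_square_add by (simp add: algebra_simps power2_eq_square)
    also have "\<dots> = q k ^ 2 + w2 * q (k - 1) ^ 2 + w4 * q (k - 2) ^ 2"
      using q_rec[of k] 3 by simp
    finally have "q (2 * k) = q k ^ 2 + w2 * q (k - 1) ^ 2 + w4 * q (k - 2) ^ 2" .
    moreover have "q (2 * k + 1) = w2 * q (2 * k - 1) + w3 * q (2 * k - 2) + w4 * q (2 * k - 3)"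
      using q_rec[of "2 * k + 1"] 3 by (simp add: algebra_simps)
    then have "q (2 * k + 1) = w3 * q (k - 1) ^ 2"
      unfolding odd1 even1 odd2 by (simp add: algebra_simps)
    ultimately show ?thesis ..
  qed
qed

lemma q_odd: "q (2 * k + 1) = w3 * q (k - 1) ^ 2"
  using q_double by blast

lemma q_two_power_minus_3: "q (2 ^ t - 3) = 0"
proof (induction t)
  case 0
  then show ?case by (simp add: q_neg)
next
  case (Suc t)
  have "(2::int) ^ Suc t - 3 = 2 * (2 ^ t - 2) + 1"
    by simp
  then show ?case
    using q_odd[of "2 ^ t - 2"] Suc by simp
qed

definition q_relation :: "int \<Rightarrow> int \<Rightarrow> F2w" where
  "q_relation m n = q (m - n) * q n + q (m - n + 1) * q (n - 1)
     + (q (m - n + 2) + w2 * q (m - n)) * q (n - 2)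
     + (q (m - n + 3) + w2 * q (m - n + 1) + w3 * q (m - n)) * q (n - 3)"

lemma q_relation_0: "q_relation m 0 = q m"
  by (simp add: q_relation_def q_0 q_neg)

lemma q_relation_Suc:
  assumes "0 \<le> n" and "n \<le> m + 2"
  shows "q_relation m (n + 1) = q_relation m n"
proof -
  have "q (n + 1) = w2 * q (n - 1) + w3 * q (n - 2) + w4 * q (n - 3)"
    using q_rec[of "n + 1"] assms by (simp add: algebra_simps)
  moreover have "q (m - n + 3) = w2 * q (m - n + 1) + w3 * q (m - n) + w4 * q (m - n - 1)"
    using q_rec[of "m - n + 3"] assms by (simp add: algebra_simps)
  moreover have "m - (n + 1) = m - n - 1" "m - (n + 1) + 1 = m - n" "m - (n + 1) + 2 = m - n + 1"
    "m - (n + 1) + 3 = m - n + 2"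
    by auto
  ultimately show ?thesis
    by (simp add: q_relation_def algebra_simps)
qed

lemma q_relation_eq:
  assumes "0 \<le> n" and "n \<le> m + 3"
  shows "q_relation m n = q m"
  using assms
proof (induction n rule: int_ge_induct)
  case base
  show ?case by (rule q_relation_0)
next
  case (step n)
  then show ?case using q_relation_Suc[of n m] by simp
qed

theorem mainTheorem10:
  fixes t :: nat and n m i :: int
  assumes "t \<ge> 2"
    and "m = 2 ^ t - 3"
    and "0 \<le> n" and "n \<le> m"
    and "i = m - n"
  shows "q i * q n + q (i + 1) * q (n - 1) + (q (i + 2) + w2 * q i) * q (n - 2)
         + (q (i + 3) + w2 * q (i + 1) + w3 * q i) * q (n - 3) = 0"
proof -
  have "q_relation m n = q m"
    using assms by (intro q_relation_eq) simp_all
  also have "\<dots> = 0"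
    using assms q_two_power_minus_3 by simp
  finally show ?thesis
    using assms by (simp add: q_relation_def)
qed

end
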